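(* Let $p>1$, let $\varphi:\mathbb{R}^n\to\mathbb{R}\cup\{+\infty\}$ be proper and lower semicontinuous. Then: (a) for each $\gamma>0$, $\inf_{y}\varphi^p_\gamma(y)=\inf_y\varphi(y)$; (b) for $\gamma>0$, if $\operatorname{prox}^p_{\gamma\varphi}(x)\neq\emptyset$ for every $x\in\mathbb{R}^n$ and $\inf_y\varphi(y)\neq-\infty$, then $\operatorname{argmin}\varphi^p_\gamma=\operatorname{argmin}\varphi$; (c) if $\varphi$ is high-order prox-bounded with threshold $\gamma^{\varphi,p}>0$ and $\inf\varphi\neq-\infty$, then for each $\gamma\in(0,\gamma^{\varphi,p})$, $\operatorname{argmin}\varphi^p_\gamma=\operatorname{argmin}\varphi$; (d) for each $\gamma>0$, $\operatorname{argmin}\varphi\subseteq\mathrm{Fix}(\operatorname{prox}^p_{\gamma\varphi})\subseteq\mathrm{Fcrit}(\varphi)\subseteq\mathrm{Mcrit}(\varphi)$; (e) if $\varphi$ is high-order prox-bounded with threshold $\gamma^{\varphi,p}>0$ and $\inf\varphi\neq-\infty$, then for each $\gamma\in(0,\gamma^{\varphi,p})$, $\operatorname{argmin}\varphi\subseteq\mathrm{Fcrit}(\varphi^p_\gamma)\subseteq\mathrm{Fix}(\operatorname{prox}^p_{\gamma\varphi})\subseteq\mathrm{Fcrit}(\varphi)\subseteq\mathrm{Mcrit}(\varphi)$.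
   Context: $\operatorname{prox}^p_{\gamma\varphi}(x):=\operatorname{argmin}_{y}\big(\varphi(y)+\frac{1}{p\gamma}\|x-y\|^p\big)$, $\varphi^p_\gamma(x):=\inf_{y}\big(\varphi(y)+\frac{1}{p\gamma}\|x-y\|^p\big)$. $\varphi$ is high-order prox-bounded (order $p$) if $\varphi^p_\gamma(x)>-\infty$ for some $\gamma>0,x$; the supremum of such $\gamma$ is the threshold $\gamma^{\varphi,p}$. $\mathrm{Fix}(\operatorname{prox}^p_{\gamma\varphi})=\{x: x\in\operatorname{prox}^p_{\gamma\varphi}(x)\}$ (proximal fixed points). For a proper lsc $h$, $\mathrm{Fcrit}(h)=\{x\in\operatorname{dom}h:0\in\hat\partial h(x)\}$ and $\mathrm{Mcrit}(h)=\{x\in\operatorname{dom}h:0\in\partial h(x)\}$, where $\hat\partial$ and $\partial$ are the Fréchet and Mordukhovich (limiting) subdifferentials. *)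

theory Defs
  imports "HOL-Analysis.Analysis"
begin

text \<open>A function into R \<union> {+\<infinity>} is
  modelled as an ereal-valued function never taking the value -\<infinity>.\<close>

definition proper_fun :: "('a \<Rightarrow> ereal) \<Rightarrow> bool" where
  "proper_fun f \<longleftrightarrow> (\<forall>x. f x \<noteq> -\<infinity>) \<and> (\<exists>x. f x < \<infinity>)"

definition lsc_fun :: "('a::topological_space \<Rightarrow> ereal) \<Rightarrow> bool" where
  "lsc_fun f \<longleftrightarrow> (\<forall>x. f x \<le> Liminf (at x) f)"

definition edom :: "('a \<Rightarrow> ereal) \<Rightarrow> 'a set" where
  "edom f = {x. f x < \<infinity>}"

definition argmin_set :: "('a \<Rightarrow> ereal) \<Rightarrow> 'a set" where
  "argmin_set f = {x. \<forall>y. f x \<le> f y}"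

definition hmoreau :: "real \<Rightarrow> real \<Rightarrow> ('a::real_normed_vector \<Rightarrow> ereal) \<Rightarrow> 'a \<Rightarrow> ereal" where
  "hmoreau p \<gamma> \<phi> x = (INF y. \<phi> y + ereal (norm (x - y) powr p / (p * \<gamma>)))"

definition hprox :: "real \<Rightarrow> real \<Rightarrow> ('a::real_normed_vector \<Rightarrow> ereal) \<Rightarrow> 'a \<Rightarrow> 'a set" where
  "hprox p \<gamma> \<phi> x = argmin_set (\<lambda>y. \<phi> y + ereal (norm (x - y) powr p / (p * \<gamma>)))"

definition prox_fix :: "real \<Rightarrow> real \<Rightarrow> ('a::real_normed_vector \<Rightarrow> ereal) \<Rightarrow> 'a set" where
  "prox_fix p \<gamma> \<phi> = {x. x \<in> hprox p \<gamma> \<phi> x}"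

definition hprox_bounded :: "real \<Rightarrow> ('a::real_normed_vector \<Rightarrow> ereal) \<Rightarrow> bool" where
  "hprox_bounded p \<phi> \<longleftrightarrow> (\<exists>\<gamma>>0. \<exists>x. hmoreau p \<gamma> \<phi> x > -\<infinity>)"

text \<open>Threshold: supremum of admissible \<gamma> (possibly +\<infinity>, hence ereal).\<close>
definition prox_threshold :: "real \<Rightarrow> ('a::real_normed_vector \<Rightarrow> ereal) \<Rightarrow> ereal" where
  "prox_threshold p \<phi> = (SUP \<gamma> \<in> {\<gamma>. \<gamma> > 0 \<and> (\<exists>x. hmoreau p \<gamma> \<phi> x > -\<infinity>)}. ereal \<gamma>)"

text \<open>Frechet (regular) subdifferential: v \<in> \<partial>^f(x) iff f(x) finite and
  liminf_{y\<rightarrow>x, y\<noteq>x} (f y - f x - <v, y - x>)/|y - x| \<ge> 0, written out in \<epsilon>-\<delta> form.\<close>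
definition frechet_subdiff :: "('a::real_inner \<Rightarrow> ereal) \<Rightarrow> 'a \<Rightarrow> 'a set" where
  "frechet_subdiff f x = {v. \<bar>f x\<bar> \<noteq> \<infinity> \<and>
     (\<forall>\<epsilon>>0. \<exists>\<delta>>0. \<forall>y. norm (y - x) < \<delta> \<longrightarrow>
        f y \<ge> f x + ereal (inner v (y - x) - \<epsilon> * norm (y - x)))}"

definition limiting_subdiff :: "('a::real_inner \<Rightarrow> ereal) \<Rightarrow> 'a \<Rightarrow> 'a set" where
  "limiting_subdiff f x = {v. \<bar>f x\<bar> \<noteq> \<infinity> \<and>
     (\<exists>xs vs. xs \<longlonglongrightarrow> x \<and> (\<lambda>k. f (xs k)) \<longlonglongrightarrow> f x \<and>
        (\<forall>k. vs k \<in> frechet_subdiff f (xs k)) \<and> vs \<longlonglongrightarrow> v)}"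

definition Fcrit :: "('a::real_inner \<Rightarrow> ereal) \<Rightarrow> 'a set" where
  "Fcrit h = {x \<in> edom h. 0 \<in> frechet_subdiff h x}"

definition Mcrit :: "('a::real_inner \<Rightarrow> ereal) \<Rightarrow> 'a set" where
  "Mcrit h = {x \<in> edom h. 0 \<in> limiting_subdiff h x}"

end

theory Submission
  imports Defs
begin

(* The envelope lies between inf \<phi> and \<phi>; this gives (a) and puts argmin \<phi> inside the
   argmin of the envelope.  The converse inclusions rest on one observation: if \<phi> x > e, lower
   semicontinuity keeps the proximal objective y \<mapsto> \<phi> y + |x - y|^p/(p \<gamma>) above e on a ball
   of radius r around x, so the envelope at x exceeds e as soon as the objective also stays
   above some k > e outside that ball.  For a minimizer x of the envelope take e = inf \<phi>:
   outside the ball the penalty alone adds r^p/(p \<gamma>).  For a Frechet stationary point x of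
   the envelope take e = the envelope at x, which yields x \<in> prox x: for y outside the ball,
   compare with the point z at distance s from x towards y; stationarity bounds the envelope
   at z below by e - o(s), while the penalty from z to y is smaller than the one from x to y
   by at least s r^(p-1)/(p \<gamma>).  The remaining inclusions hold because for p > 1 the
   penalty is o(|y - x|). *)

lemma hmoreau_le: "hmoreau p \<gamma> \<phi> x \<le> \<phi> y + ereal (norm (x - y) powr p / (p * \<gamma>))"
  unfolding hmoreau_def by (rule INF_lower) simp

lemma hmoreau_le_self: "hmoreau p \<gamma> \<phi> x \<le> \<phi> x"
  using hmoreau_le[of p \<gamma> \<phi> x x] by simp

lemma le_plus_penalty:
  assumes "p > 0" "\<gamma> > 0"
  shows "f \<le> f + ereal (norm v powr p / (p * \<gamma>))"
  using assms by (intro ereal_le_add_self) simp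

lemma INF_le_hmoreau:
  assumes "p > 0" "\<gamma> > 0"
  shows "(INF y. \<phi> y) \<le> hmoreau p \<gamma> \<phi> x"
  unfolding hmoreau_def
proof (rule INF_greatest)
  fix y
  have "(INF y. \<phi> y) \<le> \<phi> y"
    by (rule INF_lower) simp
  also have "\<dots> \<le> \<phi> y + ereal (norm (x - y) powr p / (p * \<gamma>))"
    by (rule le_plus_penalty[OF assms])
  finally show "(INF y. \<phi> y) \<le> \<phi> y + ereal (norm (x - y) powr p / (p * \<gamma>))" .
qed

lemma INF_hmoreau_eq:
  assumes "p > 0" "\<gamma> > 0"
  shows "(INF y. hmoreau p \<gamma> \<phi> y) = (INF y. \<phi> y)"
proof (rule antisym)
  show "(INF y. hmoreau p \<gamma> \<phi> y) \<le> (INF y. \<phi> y)"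
    by (rule INF_mono) (use hmoreau_le_self in blast)
  show "(INF y. \<phi> y) \<le> (INF y. hmoreau p \<gamma> \<phi> y)"
    by (rule INF_greatest) (rule INF_le_hmoreau[OF assms])
qed

lemma proper_fun_INF_less_infinity: "proper_fun \<phi> \<Longrightarrow> (INF y. \<phi> y) < \<infinity>"
  unfolding proper_fun_def by (meson INF_lower UNIV_I le_less_trans)

lemma argmin_set_iff_le_INF: "x \<in> argmin_set f \<longleftrightarrow> f x \<le> (INF y. f y)"
  unfolding argmin_set_def by (simp add: le_INF_iff)

lemma argmin_set_eq_INF: "x \<in> argmin_set f \<Longrightarrow> f x = (INF y. f y)"
  by (simp add: argmin_set_iff_le_INF antisym INF_lower)

lemma lsc_fun_less_near:
  fixes \<phi> :: "'a::real_normed_vector \<Rightarrow> ereal"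
  assumes "lsc_fun \<phi>" "a < \<phi> x"
  obtains r where "r > 0" "\<And>y. norm (y - x) < r \<Longrightarrow> a < \<phi> y"
proof -
  have "a < Liminf (at x) \<phi>"
    using assms less_le_trans unfolding lsc_fun_def by blast
  then have "\<forall>\<^sub>F y in at x. a < \<phi> y"
    by (rule less_LiminfD)
  then obtain r where r: "r > 0" "\<And>y. y \<noteq> x \<Longrightarrow> dist y x < r \<Longrightarrow> a < \<phi> y"
    unfolding eventually_at by blast
  show ?thesis
  proof (rule that)
    fix y assume "norm (y - x) < r"
    with r(2) assms(2) show "a < \<phi> y"
      by (cases "y = x") (auto simp: dist_norm)
  qed (fact r(1))
qed

lemma less_hmoreau_if_lsc:
  fixes \<phi> :: "'a::real_normed_vector \<Rightarrow> ereal"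
  assumes "p > 0" "\<gamma> > 0" "lsc_fun \<phi>" "e < \<phi> x"
    and far: "\<And>r. r > 0 \<Longrightarrow> \<exists>k>e. \<forall>y. r \<le> norm (y - x) \<longrightarrow>
                 k \<le> \<phi> y + ereal (norm (x - y) powr p / (p * \<gamma>))"
  shows "e < hmoreau p \<gamma> \<phi> x"
proof -
  obtain c where c: "e < c" "c < \<phi> x"
    using dense[OF assms(4)] by blast
  obtain r where r: "r > 0" "\<And>y. norm (y - x) < r \<Longrightarrow> c < \<phi> y"
    using lsc_fun_less_near[OF assms(3) c(2)] by blast
  obtain k where k: "e < k"
    "\<And>y. r \<le> norm (y - x) \<Longrightarrow> k \<le> \<phi> y + ereal (norm (x - y) powr p / (p * \<gamma>))"
    using far[OF r(1)] by blast
  have "min c k \<le> \<phi> y + ereal (norm (x - y) powr p / (p * \<gamma>))" for y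
  proof (cases "norm (y - x) < r")
    case True
    then show ?thesis
      using r(2) le_plus_penalty[OF assms(1,2)] by (meson less_imp_le min.coboundedI1 order_trans)
  next
    case False
    then show ?thesis
      using k(2) by (simp add: min.coboundedI2)
  qed
  then have "min c k \<le> hmoreau p \<gamma> \<phi> x"
    unfolding hmoreau_def by (rule INF_greatest)
  moreover have "e < min c k"
    using c(1) k(1) by simp
  ultimately show ?thesis
    by (rule order.strict_trans2[rotated])
qed

lemma argmin_set_subset_argmin_hmoreau:
  assumes "p > 0" "\<gamma> > 0"
  shows "argmin_set \<phi> \<subseteq> argmin_set (hmoreau p \<gamma> \<phi>)"
  by (auto simp: argmin_set_iff_le_INF INF_hmoreau_eq[OF assms] intro: order_trans[OF hmoreau_le_self])

lemma prox_objective_far_bound_INF: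
  assumes "p > 0" "\<gamma> > 0" "(INF y. \<phi> y) = ereal m" "r > 0"
  shows "\<exists>k>ereal m. \<forall>y. r \<le> norm (y - x) \<longrightarrow>
           k \<le> \<phi> y + ereal (norm (x - y) powr p / (p * \<gamma>))"
proof (intro exI[of _ "ereal (m + r powr p / (p * \<gamma>))"] conjI allI impI)
  show "ereal m < ereal (m + r powr p / (p * \<gamma>))"
    using assms by simp
  fix y assume "r \<le> norm (y - x)"
  then have "r powr p / (p * \<gamma>) \<le> norm (x - y) powr p / (p * \<gamma>)"
    using assms by (simp add: norm_minus_commute powr_mono2 divide_right_mono)
  moreover have "ereal m \<le> \<phi> y"
    using assms(3) INF_lower[of y UNIV \<phi>] by simp
  ultimately have "ereal m + ereal (r powr p / (p * \<gamma>))
      \<le> \<phi> y + ereal (norm (x - y) powr p / (p * \<gamma>))"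
    by (intro add_mono) simp_all
  then show "ereal (m + r powr p / (p * \<gamma>)) \<le> \<phi> y + ereal (norm (x - y) powr p / (p * \<gamma>))"
    by simp
qed

lemma argmin_hmoreau_eq:
  fixes \<phi> :: "'a::real_normed_vector \<Rightarrow> ereal"
  assumes "p > 0" "\<gamma> > 0" "lsc_fun \<phi>" "(INF y. \<phi> y) \<noteq> -\<infinity>"
  shows "argmin_set (hmoreau p \<gamma> \<phi>) = argmin_set \<phi>"
proof
  show "argmin_set (hmoreau p \<gamma> \<phi>) \<subseteq> argmin_set \<phi>"
  proof
    fix x assume "x \<in> argmin_set (hmoreau p \<gamma> \<phi>)"
    then have env: "hmoreau p \<gamma> \<phi> x = (INF y. \<phi> y)"
      by (simp add: argmin_set_eq_INF INF_hmoreau_eq[OF assms(1,2)])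
    have "\<not> (INF y. \<phi> y) < \<phi> x"
    proof
      assume less: "(INF y. \<phi> y) < \<phi> x"
      then obtain m where m: "(INF y. \<phi> y) = ereal m"
        using assms(4) by (cases "INF y. \<phi> y") auto
      have "ereal m < hmoreau p \<gamma> \<phi> x"
        using less m prox_objective_far_bound_INF[OF assms(1,2) m]
        by (intro less_hmoreau_if_lsc[OF assms(1-3)]) auto
      with env m show False
        by simp
    qed
    then show "x \<in> argmin_set \<phi>"
      by (simp add: argmin_set_iff_le_INF)
  qed
qed (rule argmin_set_subset_argmin_hmoreau[OF assms(1,2)])

lemma argmin_set_subset_prox_fix:
  assumes "p > 0" "\<gamma> > 0"
  shows "argmin_set \<phi> \<subseteq> prox_fix p \<gamma> \<phi>"
  unfolding argmin_set_def prox_fix_def hprox_def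
  using le_plus_penalty[OF assms] by (auto intro: order_trans)

lemma zero_in_frechet_subdiff_iff:
  "0 \<in> frechet_subdiff f x \<longleftrightarrow> \<bar>f x\<bar> \<noteq> \<infinity> \<and>
     (\<forall>\<epsilon>>0. \<exists>\<delta>>0. \<forall>y. norm (y - x) < \<delta> \<longrightarrow> f x - ereal (\<epsilon> * norm (y - x)) \<le> f y)"
  unfolding frechet_subdiff_def by (simp add: minus_ereal_def)

lemma powr_le_mult_near_0:
  fixes p \<epsilon> :: real
  assumes "p > 1" "\<epsilon> > 0"
  obtains \<delta> where "\<delta> > 0" "\<And>t. 0 \<le> t \<Longrightarrow> t < \<delta> \<Longrightarrow> t powr p \<le> \<epsilon> * t"
proof
  show "\<epsilon> powr (1 / (p - 1)) > 0"
    using assms by simp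
  fix t :: real assume t: "0 \<le> t" "t < \<epsilon> powr (1 / (p - 1))"
  have "t powr (p - 1) \<le> (\<epsilon> powr (1 / (p - 1))) powr (p - 1)"
    using assms t by (intro powr_mono2) auto
  also have "\<dots> = \<epsilon>"
    using assms by (simp add: powr_powr)
  finally have "t powr (p - 1) * t \<le> \<epsilon> * t"
    using t by (simp add: mult_right_mono)
  then show "t powr p \<le> \<epsilon> * t"
    using powr_add[of t "p - 1" 1] t by simp
qed

lemma Fcrit_if_le_plus_powr:
  fixes f :: "'a::real_inner \<Rightarrow> ereal"
  assumes "p > 1" "c \<ge> 0" "\<bar>f x\<bar> \<noteq> \<infinity>"
    and le: "\<And>y. f x \<le> f y + ereal (c * norm (y - x) powr p)"
  shows "x \<in> Fcrit f"
proof -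
  obtain a where a: "f x = ereal a"
    using assms(3) by (cases "f x") auto
  have "\<exists>\<delta>>0. \<forall>y. norm (y - x) < \<delta> \<longrightarrow> f x - ereal (\<epsilon> * norm (y - x)) \<le> f y"
    if "\<epsilon> > 0" for \<epsilon>
  proof -
    have "\<epsilon> / (c + 1) > 0"
      using that assms(2) by simp
    then obtain \<delta> where \<delta>: "\<delta> > 0" "\<And>t. 0 \<le> t \<Longrightarrow> t < \<delta> \<Longrightarrow> t powr p \<le> \<epsilon> / (c + 1) * t"
      using powr_le_mult_near_0[OF assms(1)] by blast
    have "f x - ereal (\<epsilon> * norm (y - x)) \<le> f y" if "norm (y - x) < \<delta>" for y
    proof -
      have "c * norm (y - x) powr p \<le> (c + 1) * (\<epsilon> / (c + 1) * norm (y - x))"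
        using \<delta>(2)[OF norm_ge_zero that] assms(2) by (intro mult_mono) auto
      also have "\<dots> = \<epsilon> * norm (y - x)"
        using assms(2) by simp
      finally show ?thesis
        using le[of y] a by (cases "f y") auto
    qed
    with \<delta>(1) show ?thesis
      by blast
  qed
  with assms(3) a show ?thesis
    unfolding Fcrit_def edom_def zero_in_frechet_subdiff_iff by auto
qed

lemma argmin_set_subset_Fcrit:
  fixes f :: "'a::real_inner \<Rightarrow> ereal"
  assumes "\<bar>INF y. f y\<bar> \<noteq> \<infinity>"
  shows "argmin_set f \<subseteq> Fcrit f"
proof
  fix x assume x: "x \<in> argmin_set f"
  then have "\<bar>f x\<bar> \<noteq> \<infinity>"
    using assms by (simp add: argmin_set_eq_INF)
  moreover have "f x \<le> f y + ereal (0 * norm (y - x) powr 2)" for y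
    using x unfolding argmin_set_def by simp
  ultimately show "x \<in> Fcrit f"
    by (intro Fcrit_if_le_plus_powr[of 2 0]) auto
qed

lemma argmin_set_subset_Fcrit_hmoreau:
  fixes \<phi> :: "'a::real_inner \<Rightarrow> ereal"
  assumes "p > 0" "\<gamma> > 0" "\<bar>INF y. \<phi> y\<bar> \<noteq> \<infinity>"
  shows "argmin_set \<phi> \<subseteq> Fcrit (hmoreau p \<gamma> \<phi>)"
proof -
  have "\<bar>INF y. hmoreau p \<gamma> \<phi> y\<bar> \<noteq> \<infinity>"
    using assms by (simp add: INF_hmoreau_eq)
  then show ?thesis
    by (rule subset_trans[OF argmin_set_subset_argmin_hmoreau[OF assms(1,2)] argmin_set_subset_Fcrit])
qed

lemma prox_fix_subset_Fcrit:
  fixes \<phi> :: "'a::real_inner \<Rightarrow> ereal"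
  assumes "p > 1" "\<gamma> > 0" "proper_fun \<phi>"
  shows "prox_fix p \<gamma> \<phi> \<subseteq> Fcrit \<phi>"
proof
  fix x assume "x \<in> prox_fix p \<gamma> \<phi>"
  then have prox: "\<phi> x \<le> \<phi> y + ereal (norm (x - y) powr p / (p * \<gamma>))" for y
    unfolding prox_fix_def hprox_def argmin_set_def by simp
  have penalty_eq: "norm (x - y) powr p / (p * \<gamma>) = 1 / (p * \<gamma>) * norm (y - x) powr p" for y
    by (simp add: norm_minus_commute)
  have le: "\<phi> x \<le> \<phi> y + ereal (1 / (p * \<gamma>) * norm (y - x) powr p)" for y
    using prox[of y] unfolding penalty_eq .
  obtain z where "\<phi> z < \<infinity>"
    using assms(3) unfolding proper_fun_def by blast
  then have "\<phi> z + ereal (1 / (p * \<gamma>) * norm (z - x) powr p) < \<infinity>"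
    by simp
  with le[of z] have "\<phi> x < \<infinity>"
    by (rule le_less_trans)
  moreover have "\<phi> x \<noteq> -\<infinity>"
    using assms(3) unfolding proper_fun_def by blast
  ultimately show "x \<in> Fcrit \<phi>"
    using assms(1,2) by (intro Fcrit_if_le_plus_powr[OF assms(1) _ _ le]) auto
qed

lemma Fcrit_subset_Mcrit: "Fcrit \<phi> \<subseteq> Mcrit \<phi>"
proof
  fix x assume "x \<in> Fcrit \<phi>"
  then have f: "0 \<in> frechet_subdiff \<phi> x" and e: "x \<in> edom \<phi>"
    unfolding Fcrit_def by auto
  then have "\<bar>\<phi> x\<bar> \<noteq> \<infinity>"
    unfolding frechet_subdiff_def by simp
  with f have "0 \<in> limiting_subdiff \<phi> x"
    unfolding limiting_subdiff_def
    by (intro CollectI conjI exI[of _ "\<lambda>k. x"] exI[of _ "\<lambda>k. 0"]) auto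
  with e show "x \<in> Mcrit \<phi>"
    unfolding Mcrit_def by blast
qed

lemma powr_diff_ge:
  fixes p r s n :: real
  assumes "p \<ge> 1" "0 \<le> s" "s \<le> n" "0 \<le> r" "r \<le> n"
  shows "s * r powr (p - 1) \<le> n powr p - (n - s) powr p"
proof -
  have "(n - s) powr p = (n - s) * (n - s) powr (p - 1)"
    using powr_add[of "n - s" 1 "p - 1"] assms by simp
  also have "\<dots> \<le> (n - s) * n powr (p - 1)"
    using assms by (intro mult_left_mono powr_mono2) auto
  also have "\<dots> = n powr p - s * n powr (p - 1)"
    using powr_add[of n 1 "p - 1"] assms by (simp add: algebra_simps)
  also have "\<dots> \<le> n powr p - s * r powr (p - 1)"
    using assms by (simp add: mult_left_mono powr_mono2)
  finally show ?thesis
    by simp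
qed

lemma prox_objective_far_bound_stationary:
  fixes \<phi> :: "'a::real_inner \<Rightarrow> ereal"
  assumes "p > 1" "\<gamma> > 0" "0 \<in> frechet_subdiff (hmoreau p \<gamma> \<phi>) x" "r > 0"
  shows "\<exists>k>hmoreau p \<gamma> \<phi> x. \<forall>y. r \<le> norm (y - x) \<longrightarrow>
           k \<le> \<phi> y + ereal (norm (x - y) powr p / (p * \<gamma>))"
proof -
  \<comment> \<open>Half the rate r^(p-1)/(p \<gamma>) at which the penalty decreases along the segment,
    so that half of the decrease survives the loss allowed by stationarity.\<close>
  define \<epsilon> where "\<epsilon> = r powr (p - 1) / (2 * p * \<gamma>)"
  have "\<epsilon> > 0"
    using assms unfolding \<epsilon>_def by simp
  obtain e where e: "hmoreau p \<gamma> \<phi> x = ereal e"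
    using assms(3) unfolding zero_in_frechet_subdiff_iff by (cases "hmoreau p \<gamma> \<phi> x") auto
  obtain \<delta> where \<delta>: "\<delta> > 0"
    "\<And>z. norm (z - x) < \<delta> \<Longrightarrow> ereal (e - \<epsilon> * norm (z - x)) \<le> hmoreau p \<gamma> \<phi> z"
    using assms(3) \<open>\<epsilon> > 0\<close> e unfolding zero_in_frechet_subdiff_iff by force
  define s where "s = min (\<delta> / 2) r"
  have s: "0 < s" "s < \<delta>" "s \<le> r"
    using \<delta>(1) assms(4) unfolding s_def by auto
  show ?thesis
  proof (intro exI[of _ "ereal (e + \<epsilon> * s)"] conjI allI impI)
    show "hmoreau p \<gamma> \<phi> x < ereal (e + \<epsilon> * s)"
      using e \<open>\<epsilon> > 0\<close> s by simp
    fix y assume y: "r \<le> norm (y - x)"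
    define n where "n = norm (y - x)"
    define z where "z = x + (s / n) *\<^sub>R (y - x)"
    have n: "s \<le> n" "r \<le> n" "n > 0"
      using s y assms(4) unfolding n_def by auto
    have "norm (z - x) = s"
      using n s(1) unfolding z_def n_def by simp
    moreover have "norm (z - y) = n - s"
    proof -
      have "z - y = (1 - s / n) *\<^sub>R (x - y)"
        unfolding z_def by (simp add: algebra_simps)
      then show ?thesis
        using n by (simp add: n_def norm_minus_commute divide_simps)
    qed
    ultimately have lower: "ereal (e - \<epsilon> * s) \<le> \<phi> y + ereal ((n - s) powr p / (p * \<gamma>))"
      using \<delta>(2)[of z] s hmoreau_le[of p \<gamma> \<phi> z y] by (metis order_trans)
    have "e + \<epsilon> * s \<le> e - \<epsilon> * s + s * r powr (p - 1) / (p * \<gamma>)"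
      unfolding \<epsilon>_def using assms(1,2) by (simp add: field_simps)
    also have "\<dots> \<le> e - \<epsilon> * s + (n powr p - (n - s) powr p) / (p * \<gamma>)"
      using powr_diff_ge[of p s n r] n s assms by (simp add: divide_right_mono)
    finally have "ereal (e + \<epsilon> * s)
        \<le> ereal (e - \<epsilon> * s) + ereal ((n powr p - (n - s) powr p) / (p * \<gamma>))"
      by simp
    also have "\<dots> \<le> \<phi> y + ereal ((n - s) powr p / (p * \<gamma>))
                      + ereal ((n powr p - (n - s) powr p) / (p * \<gamma>))"
      using lower by (rule add_right_mono)
    also have "\<dots> = \<phi> y + ereal (n powr p / (p * \<gamma>))"
      by (cases "\<phi> y") (simp_all add: diff_divide_distrib)
    finally show "ereal (e + \<epsilon> * s) \<le> \<phi> y + ereal (norm (x - y) powr p / (p * \<gamma>))"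
      by (simp add: n_def norm_minus_commute)
  qed
qed

lemma Fcrit_hmoreau_subset_prox_fix:
  fixes \<phi> :: "'a::real_inner \<Rightarrow> ereal"
  assumes "p > 1" "\<gamma> > 0" "lsc_fun \<phi>"
  shows "Fcrit (hmoreau p \<gamma> \<phi>) \<subseteq> prox_fix p \<gamma> \<phi>"
proof
  fix x assume "x \<in> Fcrit (hmoreau p \<gamma> \<phi>)"
  then have stationary: "0 \<in> frechet_subdiff (hmoreau p \<gamma> \<phi>) x"
    unfolding Fcrit_def by blast
  have "\<not> hmoreau p \<gamma> \<phi> x < \<phi> x"
  proof
    assume "hmoreau p \<gamma> \<phi> x < \<phi> x"
    then have "hmoreau p \<gamma> \<phi> x < hmoreau p \<gamma> \<phi> x"
      using assms(1,2) prox_objective_far_bound_stationary[OF assms(1,2) stationary]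
      by (intro less_hmoreau_if_lsc[OF _ _ assms(3)]) auto
    then show False
      by simp
  qed
  then have "\<phi> x \<le> \<phi> y + ereal (norm (x - y) powr p / (p * \<gamma>))" for y
    using hmoreau_le[of p \<gamma> \<phi> x y] by (simp add: not_less order_trans)
  then show "x \<in> prox_fix p \<gamma> \<phi>"
    unfolding prox_fix_def hprox_def argmin_set_def by simp
qed

theorem theorem2:
  fixes \<phi> :: "'a::euclidean_space \<Rightarrow> ereal" and p :: real
  assumes "p > 1" and "proper_fun \<phi>" and "lsc_fun \<phi>"
  shows "(\<forall>\<gamma>>0. (INF y. hmoreau p \<gamma> \<phi> y) = (INF y. \<phi> y))
    \<and> (\<forall>\<gamma>>0. (\<forall>x. hprox p \<gamma> \<phi> x \<noteq> {}) \<and> (INF y. \<phi> y) \<noteq> -\<infinity> \<longrightarrow>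
          argmin_set (hmoreau p \<gamma> \<phi>) = argmin_set \<phi>)
    \<and> (hprox_bounded p \<phi> \<and> prox_threshold p \<phi> > 0 \<and> (INF y. \<phi> y) \<noteq> -\<infinity> \<longrightarrow>
          (\<forall>\<gamma>. 0 < \<gamma> \<and> ereal \<gamma> < prox_threshold p \<phi> \<longrightarrow>
             argmin_set (hmoreau p \<gamma> \<phi>) = argmin_set \<phi>))
    \<and> (\<forall>\<gamma>>0. argmin_set \<phi> \<subseteq> prox_fix p \<gamma> \<phi> \<and> prox_fix p \<gamma> \<phi> \<subseteq> Fcrit \<phi>
          \<and> Fcrit \<phi> \<subseteq> Mcrit \<phi>)
    \<and> (hprox_bounded p \<phi> \<and> prox_threshold p \<phi> > 0 \<and> (INF y. \<phi> y) \<noteq> -\<infinity> \<longrightarrow>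
          (\<forall>\<gamma>. 0 < \<gamma> \<and> ereal \<gamma> < prox_threshold p \<phi> \<longrightarrow>
             argmin_set \<phi> \<subseteq> Fcrit (hmoreau p \<gamma> \<phi>)
             \<and> Fcrit (hmoreau p \<gamma> \<phi>) \<subseteq> prox_fix p \<gamma> \<phi>
             \<and> prox_fix p \<gamma> \<phi> \<subseteq> Fcrit \<phi> \<and> Fcrit \<phi> \<subseteq> Mcrit \<phi>))"
proof -
  have "p > 0"
    using assms(1) by simp
  have INF_finite: "\<bar>INF y. \<phi> y\<bar> \<noteq> \<infinity>" if "(INF y. \<phi> y) \<noteq> -\<infinity>"
    using that proper_fun_INF_less_infinity[OF assms(2)] by auto
  show ?thesis
    using INF_hmoreau_eq[OF \<open>p > 0\<close>]
      argmin_hmoreau_eq[OF \<open>p > 0\<close> _ assms(3)]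
      argmin_set_subset_prox_fix[OF \<open>p > 0\<close>]
      prox_fix_subset_Fcrit[OF assms(1) _ assms(2)]
      Fcrit_subset_Mcrit[of \<phi>]
      argmin_set_subset_Fcrit_hmoreau[OF \<open>p > 0\<close> _ INF_finite]
      Fcrit_hmoreau_subset_prox_fix[OF assms(1) _ assms(3)]
    by (intro conjI allI impI) simp_all
qed

end
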